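(* Let $H\in(0,1)$, $n\ge1$, and let $B^1_H,\dots,B^n_H$ be independent fractional Brownian motions with Hurst index $H$. Define $I^{n-1}_F(t)=B^1_H\big(|B^2_H(\cdots|B^n_H(t)|^{1/H}\cdots)|^{1/H}\big)$. Then for every $t>0$, $$I^{n-1}_F(t)\ \stackrel{d}{=}\ B^1\big(|B^2(\cdots|B^n_H(t)|^2\cdots)|^2\big)\ \stackrel{d}{=}\ \prod_{i=1}^n B^i_{H/n}(t),$$ where $B^1,\dots,B^{n-1}$ are independent standard Brownian motions and $B^1_{H/n},\dots,B^n_{H/n}$ are independent fractional Brownian motions with Hurst index $H/n$. In particular, for $s,t>0$, $$E\Big\{\prod_{i=1}^nB^i_{H/n}(t)\prod_{i=1}^nB^i_{H/n}(s)\Big\}=\frac{1}{2^n}\Big(|t|^{2H/n}+|s|^{2H/n}-|t-s|^{2H/n}\Big)^n.$$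
   Context: A fractional Brownian motion $B_H$ with Hurst index $H\in(0,1)$ is a centered Gaussian process with covariance $\frac12(|t|^{2H}+|s|^{2H}-|t-s|^{2H})$; $B=B_{1/2}$ is standard Brownian motion. For independent processes $X$ and $Y\ge0$, $X(Y(t))$ denotes subordination, with density $\int_0^\infty f_X(x,s)f_Y(s,t)ds$; iterated compositions are defined recursively. *)

theory Defs
  imports "HOL-Probability.Probability"
begin

definition fbm_cov :: "real \<Rightarrow> real \<Rightarrow> real \<Rightarrow> real" where
  "fbm_cov H t s = (\<bar>t\<bar> powr (2*H) + \<bar>s\<bar> powr (2*H) - \<bar>t - s\<bar> powr (2*H)) / 2"

text \<open>Centered Gaussian process with covariance K: every finite linear combination
  of values is centered normal with the variance prescribed by K (point mass at 0 when
  that variance vanishes).\<close>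
definition centered_gaussian_process ::
  "'a measure \<Rightarrow> (real \<Rightarrow> 'a \<Rightarrow> real) \<Rightarrow> (real \<Rightarrow> real \<Rightarrow> real) \<Rightarrow> bool" where
  "centered_gaussian_process M X K \<longleftrightarrow>
     prob_space M \<and> (\<forall>t. X t \<in> borel_measurable M) \<and>
     (\<forall>(ts::real list) (cs::real list). length cs = length ts \<longrightarrow>
        (let v = (\<Sum>i<length ts. \<Sum>j<length ts. cs!i * cs!j * K (ts!i) (ts!j)) in
         distr M borel (\<lambda>\<omega>. \<Sum>i<length ts. cs!i * X (ts!i) \<omega>) =
           (if v = 0 then return borel 0 else density lborel (normal_density 0 (sqrt v)))))"

text \<open>Fractional Brownian motion with Hurst index H (standard BM: H = 1/2).\<close>
definition is_fbm :: "'a measure \<Rightarrow> real \<Rightarrow> (real \<Rightarrow> 'a \<Rightarrow> real) \<Rightarrow> bool" where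
  "is_fbm M H X \<longleftrightarrow> 0 < H \<and> H < 1 \<and> centered_gaussian_process M X (fbm_cov H)"

definition indep_processes :: "'a measure \<Rightarrow> (nat \<Rightarrow> real \<Rightarrow> 'a \<Rightarrow> real) \<Rightarrow> nat set \<Rightarrow> bool" where
  "indep_processes M X I \<longleftrightarrow>
     prob_space.indep_vars M (\<lambda>_. Pi\<^sub>M UNIV (\<lambda>_::real. (borel :: real measure)))
       (\<lambda>i \<omega>. \<lambda>t. X i t \<omega>) I"

definition law :: "'a measure \<Rightarrow> (real \<Rightarrow> 'a \<Rightarrow> real) \<Rightarrow> real \<Rightarrow> real measure" where
  "law M X s = distr M borel (X s)"

text \<open>Law of the iterated subordination X_1(g(X_2(g(... X_m(t))))) in the sense of the
  paper: the law of X(Y(t)) is the mixture of the laws of X(s) over the law of Y(t)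
  (density \<open>\<integral> f_X(x,s) f_Y(s,t) ds\<close>). The list contains the one-dimensional laws
  of X_1, ..., X_m; g is the map applied to the inner process before subordinating.\<close>
fun subord_law :: "(real \<Rightarrow> real measure) list \<Rightarrow> (real \<Rightarrow> real) \<Rightarrow> real \<Rightarrow> real measure" where
  "subord_law [] g t = return borel t"
| "subord_law [L] g t = L t"
| "subord_law (L # Ls) g t = bind (subord_law Ls g t) (\<lambda>x. L (g x))"

end

theory Submission imports Defs begin

(*
  Every one-dimensional law in the theorem is a centred Gaussian law, and
  a centred Gaussian of variance v is the law of sqrt v * Z for a standard normal Z.
  Write P_k for the law of a product Z_1 * ... * Z_k of k independent standard normals;
  P_(k+1) is obtained from P_k by the mixing kernel x |-> law of x * Z.

  (1) Subordination: if the innermost process has law of a * Z at time t and every outer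
      process, evaluated at g x, has law of x * Z, then the iterated subordination law
      is the law of a * Z_1 * ... * Z_n.  This covers both the chain B_H(|.|^(1/H)) and
      the chain of Brownian motions B(|.|^2), with a = |t|^H.
  (2) Products: a product of n independent variables each distributed as c * Z has the
      law of c^n * Z_1 * ... * Z_n; with c = |t|^(H/n) this is again |t|^H * P_n.
  (3) Covariance: by independence the expectation of the product factorises into n
      copies of the fBm covariance, which is obtained by polarisation from variances.
*)

section \<open>Scaled standard normal laws\<close>

definition std_normal :: "real measure" where
  "std_normal = density lborel std_normal_density"

definition scaled_normal :: "real \<Rightarrow> real measure" where
  "scaled_normal a = distr std_normal borel (\<lambda>z. a * z)"

text \<open>The centred Gaussian law of variance \<open>v\<close> exactly as it appears in
  \<open>centered_gaussian_process\<close>.\<close>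
definition centered_normal :: "real \<Rightarrow> real measure" where
  "centered_normal v = (if v = 0 then return borel 0 else density lborel (normal_density 0 (sqrt v)))"

lemma prob_space_std_normal: "prob_space std_normal"
  unfolding std_normal_def by (rule prob_space_normal_density) simp

lemma sets_std_normal [measurable_cong, simp]: "sets std_normal = sets borel"
  by (simp add: std_normal_def)

lemma std_normal_subprob: "std_normal \<in> space (subprob_algebra borel)"
  using prob_space_std_normal by (simp add: space_subprob_algebra prob_space_imp_subprob_space)

lemma scaled_normal_density:
  assumes "a \<noteq> 0"
  shows "scaled_normal a = density lborel (normal_density 0 \<bar>a\<bar>)"
proof -
  interpret prob_space std_normal by (rule prob_space_std_normal)
  have "distributed std_normal lborel (\<lambda>x. x) (normal_density 0 1)"
    unfolding distributed_def std_normal_def by (auto simp: distr_id2)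
  then have "distributed std_normal lborel (\<lambda>x. 0 + a * x) (normal_density (0 + a * 0) (\<bar>a\<bar> * 1))"
    by (rule normal_density_affine) (use assms in auto)
  then have "distr std_normal lborel (\<lambda>z. a * z) = density lborel (normal_density 0 \<bar>a\<bar>)"
    unfolding distributed_def by simp
  moreover have "distr std_normal borel (\<lambda>z. a * z) = distr std_normal lborel (\<lambda>z. a * z)"
    by (rule distr_cong) auto
  ultimately show ?thesis by (simp add: scaled_normal_def)
qed

text \<open>\<open>Z\<close> and \<open>-Z\<close> have the same law, so only \<open>\<bar>a\<bar>\<close> matters.\<close>
lemma scaled_normal_abs: "scaled_normal \<bar>a\<bar> = scaled_normal a"
  by (cases "a = 0") (simp_all add: scaled_normal_density)

lemma centered_normal_eq_scaled:
  assumes "0 \<le> v"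
  shows "centered_normal v = scaled_normal (sqrt v)"
proof (cases "v = 0")
  case True
  interpret prob_space std_normal by (rule prob_space_std_normal)
  show ?thesis using True by (simp add: centered_normal_def scaled_normal_def)
next
  case False
  then show ?thesis using assms by (simp add: centered_normal_def scaled_normal_density)
qed

lemma scaled_normal_measurable [measurable]:
  "scaled_normal \<in> measurable borel (subprob_algebra borel)"
  unfolding scaled_normal_def
  by (rule measurable_distr2[where M=borel]) (auto intro!: measurable_const std_normal_subprob)

lemma scaled_normal_second_moment:
  "integrable std_normal (\<lambda>z. (a * z)\<^sup>2)" "(\<integral>z. (a * z)\<^sup>2 \<partial>std_normal) = a\<^sup>2"
proof -
  have eq: "(\<lambda>z. std_normal_density z * (a * z)\<^sup>2) = (\<lambda>z. a\<^sup>2 * (std_normal_density z * z\<^sup>2))"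
    by (auto simp: power_mult_distrib)
  have "integrable lborel (\<lambda>z. std_normal_density z * (a * z)\<^sup>2)"
    unfolding eq by (intro integrable_mult_right integrable_std_normal_moment)
  then show "integrable std_normal (\<lambda>z. (a * z)\<^sup>2)"
    unfolding std_normal_def by (subst integrable_density) auto
  have "integral\<^sup>L lborel (\<lambda>z. std_normal_density z * z\<^sup>2) = 1"
    using integral_std_normal_moment_even[of 1] by simp
  then show "(\<integral>z. (a * z)\<^sup>2 \<partial>std_normal) = a\<^sup>2"
    unfolding std_normal_def by (subst integral_density) (auto simp: eq)
qed

lemma centered_normal_second_moment:
  fixes X :: "'a \<Rightarrow> real"
  assumes [measurable]: "X \<in> borel_measurable M"
    and law: "distr M borel X = centered_normal v" and v: "0 \<le> v"
  shows "integrable M (\<lambda>\<omega>. (X \<omega>)\<^sup>2)" "(\<integral>\<omega>. (X \<omega>)\<^sup>2 \<partial>M) = v"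
proof -
  have law': "distr M borel X = distr std_normal borel (\<lambda>z. sqrt v * z)"
    using law v by (simp add: centered_normal_eq_scaled scaled_normal_def)
  have "integrable (distr M borel X) (\<lambda>x. x\<^sup>2)"
    unfolding law' by (subst integrable_distr_eq) (auto intro: scaled_normal_second_moment)
  then show "integrable M (\<lambda>\<omega>. (X \<omega>)\<^sup>2)"
    by (subst (asm) integrable_distr_eq) auto
  have "(\<integral>\<omega>. (X \<omega>)\<^sup>2 \<partial>M) = (\<integral>x. x\<^sup>2 \<partial>distr M borel X)"
    by (subst integral_distr) auto
  also have "\<dots> = (\<integral>z. (sqrt v * z)\<^sup>2 \<partial>std_normal)"
    unfolding law' by (subst integral_distr) auto
  also have "\<dots> = v"
    using scaled_normal_second_moment(2)[of "sqrt v"] v by simp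
  finally show "(\<integral>\<omega>. (X \<omega>)\<^sup>2 \<partial>M) = v" .
qed

section \<open>Laws of products of independent standard normals\<close>

text \<open>\<open>normal_product k\<close> is the law of \<open>Z\<^sub>1 * \<dots> * Z\<^sub>k\<close> for independent standard normals:
  each further factor mixes \<open>x\<close> into the law of \<open>x * Z\<close>.\<close>
primrec normal_product :: "nat \<Rightarrow> real measure" where
  "normal_product 0 = return borel 1"
| "normal_product (Suc k) = bind (normal_product k) scaled_normal"

lemma normal_product_props: "sets (normal_product k) = sets borel \<and> prob_space (normal_product k)"
proof (induction k)
  case 0
  then show ?case by (simp add: prob_space_return)
next
  case (Suc k)
  then have sets: "sets (normal_product k) = sets borel" and prob_k: "prob_space (normal_product k)"
    by auto
  have nonempty: "space (normal_product k) \<noteq> {}"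
    using prob_space.not_empty[OF prob_k] .
  have kernel: "scaled_normal \<in> measurable (normal_product k) (subprob_algebra borel)"
    using sets by (simp cong: measurable_cong_sets)
  have "sets (normal_product (Suc k)) = sets borel"
    unfolding normal_product.simps
    by (rule sets_bind[OF _ nonempty]) (simp add: scaled_normal_def)
  moreover have "prob_space (normal_product (Suc k))"
    unfolding normal_product.simps
    by (rule prob_space.prob_space_bind[OF prob_k _ kernel])
       (auto simp: scaled_normal_def intro!: prob_space.prob_space_distr prob_space_std_normal)
  ultimately show ?case by simp
qed

lemma sets_normal_product [measurable_cong, simp]: "sets (normal_product k) = sets borel"
  using normal_product_props by blast

lemma space_normal_product [simp]: "space (normal_product k) = UNIV"
  using sets_eq_imp_space_eq[OF sets_normal_product] by simp

lemma normal_product_step: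
  "bind (distr (normal_product k) borel (\<lambda>x. a * x)) (\<lambda>x. scaled_normal (x * b))
     = distr (normal_product (Suc k)) borel (\<lambda>x. a * b * x)"
proof -
  have kernel: "(\<lambda>x. scaled_normal (x * b)) \<in> measurable borel (subprob_algebra borel)"
    by measurable
  have "bind (distr (normal_product k) borel (\<lambda>x. a * x)) (\<lambda>x. scaled_normal (x * b))
      = bind (normal_product k) (\<lambda>x. scaled_normal (a * x * b))"
    by (rule bind_distr[OF _ kernel]) auto
  also have "\<dots> = bind (normal_product k) (\<lambda>x. distr (scaled_normal x) borel (\<lambda>y. a * b * y))"
    by (rule bind_cong) (auto simp: scaled_normal_def distr_distr comp_def ac_simps)
  also have "\<dots> = distr (normal_product (Suc k)) borel (\<lambda>x. a * b * x)"
    unfolding normal_product.simps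
    by (rule distr_bind[symmetric, where K=borel]) (auto simp: measurable_cong_sets[OF sets_normal_product refl])
  finally show ?thesis .
qed

lemma normal_product_one: "distr (normal_product 1) borel (\<lambda>x. a * x) = scaled_normal a"
proof -
  interpret prob_space std_normal by (rule prob_space_std_normal)
  show ?thesis
    by (simp add: bind_return[OF scaled_normal_measurable] scaled_normal_def distr_distr comp_def)
qed

section \<open>Iterated subordination of Gaussian laws\<close>

lemma subord_law_Cons:
  "Ls \<noteq> [] \<Longrightarrow> subord_law (L # Ls) g t = bind (subord_law Ls g t) (\<lambda>x. L (g x))"
  by (cases Ls) simp_all

lemma subord_law_scaled_normal:
  assumes outer: "\<forall>L\<in>set Ls. \<forall>x. L (g x) = scaled_normal x"
    and inner: "L\<^sub>0 t = scaled_normal a"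
  shows "subord_law (Ls @ [L\<^sub>0]) g t = distr (normal_product (Suc (length Ls))) borel (\<lambda>x. a * x)"
  using outer
proof (induction Ls)
  case Nil
  then show ?case using inner normal_product_one[of a] by simp
next
  case (Cons L Ls)
  have "subord_law ((L # Ls) @ [L\<^sub>0]) g t = bind (subord_law (Ls @ [L\<^sub>0]) g t) (\<lambda>x. L (g x))"
    by (simp add: subord_law_Cons)
  also have "\<dots> = bind (distr (normal_product (Suc (length Ls))) borel (\<lambda>x. a * x)) (\<lambda>x. scaled_normal (x * 1))"
    using Cons by simp
  also have "\<dots> = distr (normal_product (Suc (length (L # Ls)))) borel (\<lambda>x. a * x)"
    using normal_product_step[of "Suc (length Ls)" a 1] by simp
  finally show ?case .
qed

section \<open>One- and two-dimensional laws of fractional Brownian motion\<close>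

lemma fbm_measurable:
  assumes "is_fbm M H X"
  shows "prob_space M" "X t \<in> borel_measurable M"
  using assms by (auto simp: is_fbm_def centered_gaussian_process_def)

lemma centered_gaussian_process_linear:
  assumes "centered_gaussian_process M X K" "length cs = length ts"
  shows "distr M borel (\<lambda>\<omega>. \<Sum>i<length ts. cs!i * X (ts!i) \<omega>) =
           centered_normal (\<Sum>i<length ts. \<Sum>j<length ts. cs!i * cs!j * K (ts!i) (ts!j))"
  using assms unfolding centered_gaussian_process_def centered_normal_def Let_def by blast

lemma law_fbm:
  assumes "is_fbm M H X"
  shows "law M X s = centered_normal (\<bar>s\<bar> powr (2*H))"
  using centered_gaussian_process_linear[of M X "fbm_cov H" "[1]" "[s]"] assms
  by (simp add: is_fbm_def law_def fbm_cov_def)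

lemma law_fbm_scaled_normal:
  assumes "is_fbm M H X"
  shows "law M X s = scaled_normal (\<bar>s\<bar> powr H)"
  using assms powr_half_sqrt_powr[of "\<bar>s\<bar>" "2 * H"] by (simp add: law_fbm centered_normal_eq_scaled)

lemma law_fbm_increment:
  assumes "is_fbm M H X"
  shows "distr M borel (\<lambda>\<omega>. X t \<omega> - X s \<omega>) = centered_normal (\<bar>t - s\<bar> powr (2*H))"
proof -
  have "distr M borel (\<lambda>\<omega>. \<Sum>i<length [t,s]. [1,-1]!i * X ([t,s]!i) \<omega>)
      = centered_normal (\<Sum>i<length [t,s]. \<Sum>j<length [t,s]. [1,-1]!i * [1,-1]!j * fbm_cov H ([t,s]!i) ([t,s]!j))"
    using assms by (intro centered_gaussian_process_linear) (auto simp: is_fbm_def)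
  then show ?thesis
    by (simp add: fbm_cov_def numeral_2_eq_2 lessThan_Suc abs_minus_commute field_simps)
qed

text \<open>Step (3), one factor: \<open>E[B\<^sub>H(t) B\<^sub>H(s)]\<close> is the fBm covariance, by polarisation.\<close>
lemma fbm_cross_moment:
  assumes fbm: "is_fbm M H X"
  shows "integrable M (\<lambda>\<omega>. X t \<omega> * X s \<omega>)" "(\<integral>\<omega>. X t \<omega> * X s \<omega> \<partial>M) = fbm_cov H t s"
proof -
  note [measurable] = fbm_measurable(2)[OF fbm]
  have "integrable M (\<lambda>\<omega>. (X t \<omega>)\<^sup>2)" "(\<integral>\<omega>. (X t \<omega>)\<^sup>2 \<partial>M) = \<bar>t\<bar> powr (2*H)"
    and "integrable M (\<lambda>\<omega>. (X s \<omega>)\<^sup>2)" "(\<integral>\<omega>. (X s \<omega>)\<^sup>2 \<partial>M) = \<bar>s\<bar> powr (2*H)"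
    using centered_normal_second_moment[of "X t" M] centered_normal_second_moment[of "X s" M]
      law_fbm[OF fbm] by (auto simp: law_def)
  moreover have "integrable M (\<lambda>\<omega>. (X t \<omega> - X s \<omega>)\<^sup>2)"
    "(\<integral>\<omega>. (X t \<omega> - X s \<omega>)\<^sup>2 \<partial>M) = \<bar>t - s\<bar> powr (2*H)"
    using centered_normal_second_moment[of "\<lambda>\<omega>. X t \<omega> - X s \<omega>"] law_fbm_increment[OF fbm] by auto
  moreover have polar: "(\<lambda>\<omega>. X t \<omega> * X s \<omega>) = (\<lambda>\<omega>. ((X t \<omega>)\<^sup>2 + (X s \<omega>)\<^sup>2 - (X t \<omega> - X s \<omega>)\<^sup>2) / 2)"
    by (auto simp: power2_eq_square field_simps)
  ultimately show "integrable M (\<lambda>\<omega>. X t \<omega> * X s \<omega>)" "(\<integral>\<omega>. X t \<omega> * X s \<omega> \<partial>M) = fbm_cov H t s"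
    unfolding polar by (auto simp: fbm_cov_def)
qed

lemma subord_law_fbm:
  assumes "1 \<le> n"
    and outer: "\<forall>i\<in>{1..<n}. is_fbm M (h i) (X i) \<and> (\<forall>x. \<bar>g x\<bar> powr (2 * h i) = x\<^sup>2)"
    and inner: "is_fbm M H (X n)"
  shows "subord_law (map (\<lambda>i. law M (X i)) [1..<n+1]) g t
           = distr (normal_product n) borel (\<lambda>x. \<bar>t\<bar> powr H * x)"
proof -
  have split: "map (\<lambda>i. law M (X i)) [1..<n+1] = map (\<lambda>i. law M (X i)) [1..<n] @ [law M (X n)]"
    using assms(1) by simp
  have "\<forall>L\<in>set (map (\<lambda>i. law M (X i)) [1..<n]). \<forall>x. L (g x) = scaled_normal x"
    using outer by (auto simp: law_fbm centered_normal_eq_scaled scaled_normal_abs)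
  moreover have "law M (X n) t = scaled_normal (\<bar>t\<bar> powr H)"
    using inner by (rule law_fbm_scaled_normal)
  ultimately have "subord_law (map (\<lambda>i. law M (X i)) [1..<n] @ [law M (X n)]) g t
      = distr (normal_product (Suc (length (map (\<lambda>i. law M (X i)) [1..<n])))) borel (\<lambda>x. \<bar>t\<bar> powr H * x)"
    by (rule subord_law_scaled_normal)
  then show ?thesis
    unfolding split using assms(1) by (simp del: normal_product.simps)
qed

section \<open>Products of independent random variables\<close>

lemma indep_processes_functional:
  assumes "prob_space M" and "indep_processes M X I"
    and "F \<in> borel_measurable (Pi\<^sub>M UNIV (\<lambda>_::real. borel))"
  shows "prob_space.indep_vars M (\<lambda>_. borel) (\<lambda>i \<omega>. F (\<lambda>t. X i t \<omega>)) I"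
proof -
  interpret prob_space M by fact
  show ?thesis
    using indep_vars_compose2[of "\<lambda>_. Pi\<^sub>M UNIV (\<lambda>_. borel)" "\<lambda>i \<omega> t. X i t \<omega>" I "\<lambda>_. F"] assms
    by (simp add: indep_processes_def)
qed

lemma (in prob_space) distr_mult_indep:
  fixes X Y :: "'a \<Rightarrow> real"
  assumes ind: "indep_var borel X borel Y"
  shows "distr M borel (\<lambda>\<omega>. X \<omega> * Y \<omega>) =
           bind (distr M borel X) (\<lambda>x. distr (distr M borel Y) borel (\<lambda>y. x * y))"
proof -
  have [measurable]: "X \<in> borel_measurable M" "Y \<in> borel_measurable M"
    using ind by (auto simp: indep_var_distribution_eq)
  let ?DX = "distr M borel X" and ?DY = "distr M borel Y" and ?mult = "\<lambda>(x::real, y). x * y"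
  interpret DX: prob_space ?DX by (rule prob_space_distr) simp
  interpret DY: prob_space ?DY by (rule prob_space_distr) simp
  have mult [measurable]: "?mult \<in> borel_measurable (borel \<Otimes>\<^sub>M borel)"
    by (simp add: case_prod_beta')
  have kernel: "(\<lambda>x. distr ?DY borel (\<lambda>y. x * y)) \<in> measurable ?DX (subprob_algebra borel)"
    by (rule measurable_distr2[where M=borel])
       (auto simp: space_subprob_algebra prob_space_imp_subprob_space DY.prob_space_axioms)
  have "distr M borel (\<lambda>\<omega>. X \<omega> * Y \<omega>) = distr (distr M (borel \<Otimes>\<^sub>M borel) (\<lambda>\<omega>. (X \<omega>, Y \<omega>))) borel ?mult"
    by (subst distr_distr) (auto simp: comp_def)
  also have "\<dots> = distr (?DX \<Otimes>\<^sub>M ?DY) borel ?mult"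
    using ind by (simp add: indep_var_distribution_eq)
  also have "\<dots> = bind ?DX (\<lambda>x. distr ?DY borel (\<lambda>y. x * y))"
  proof (rule measure_eqI)
    show "sets (distr (?DX \<Otimes>\<^sub>M ?DY) borel ?mult) = sets (bind ?DX (\<lambda>x. distr ?DY borel (\<lambda>y. x * y)))"
      by (subst sets_bind) (auto simp: DX.not_empty)
    fix A assume "A \<in> sets (distr (?DX \<Otimes>\<^sub>M ?DY) borel ?mult)"
    then have A: "A \<in> sets borel" by simp
    have "emeasure (distr (?DX \<Otimes>\<^sub>M ?DY) borel ?mult) A
        = (\<integral>\<^sup>+x. emeasure ?DY (Pair x -` (?mult -` A \<inter> space (?DX \<Otimes>\<^sub>M ?DY))) \<partial>?DX)"
      using A measurable_sets[OF mult A]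
      by (subst emeasure_distr, simp_all, subst DY.emeasure_pair_measure_alt) (auto simp: space_pair_measure)
    also have "\<dots> = (\<integral>\<^sup>+x. emeasure (distr ?DY borel (\<lambda>y. x * y)) A \<partial>?DX)"
      using A by (intro nn_integral_cong) (auto simp: emeasure_distr space_pair_measure intro!: arg_cong2[where f=emeasure])
    also have "\<dots> = emeasure (bind ?DX (\<lambda>x. distr ?DY borel (\<lambda>y. x * y))) A"
      using A by (subst emeasure_bind[OF DX.not_empty kernel]) auto
    finally show "emeasure (distr (?DX \<Otimes>\<^sub>M ?DY) borel ?mult) A
        = emeasure (bind ?DX (\<lambda>x. distr ?DY borel (\<lambda>y. x * y))) A" .
  qed
  finally show ?thesis .
qed

lemma (in prob_space) distr_prod_indep_scaled_normal:
  fixes Xs :: "nat \<Rightarrow> 'a \<Rightarrow> real"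
  assumes ind: "indep_vars (\<lambda>_. borel) Xs I" and "finite J" "J \<subseteq> I"
    and law: "\<forall>i\<in>I. distr M borel (Xs i) = scaled_normal c"
  shows "distr M borel (\<lambda>\<omega>. \<Prod>i\<in>J. Xs i \<omega>) = distr (normal_product (card J)) borel (\<lambda>x. c ^ card J * x)"
  using \<open>finite J\<close> \<open>J \<subseteq> I\<close>
proof (induction J rule: finite_subset_induct')
  case empty
  then show ?case by (simp add: distr_return)
next
  case (insert a F)
  have [measurable]: "\<And>i. i \<in> I \<Longrightarrow> Xs i \<in> borel_measurable M"
    using ind by (auto simp: indep_vars_def)
  have "indep_var (Pi\<^sub>M F (\<lambda>_. borel)) (\<lambda>\<omega>. restrict (\<lambda>i. Xs i \<omega>) F)
                  (Pi\<^sub>M {a} (\<lambda>_. borel)) (\<lambda>\<omega>. restrict (\<lambda>i. Xs i \<omega>) {a})"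
    by (rule indep_var_restrict[OF ind]) (use insert in auto)
  from indep_var_compose[OF this, of "\<lambda>f. \<Prod>i\<in>F. f i" borel "\<lambda>f. f a" borel]
  have ind_step: "indep_var borel (\<lambda>\<omega>. \<Prod>i\<in>F. Xs i \<omega>) borel (Xs a)"
    by (simp add: comp_def cong: prod.cong)
  have "distr M borel (\<lambda>\<omega>. \<Prod>i\<in>insert a F. Xs i \<omega>) = distr M borel (\<lambda>\<omega>. (\<Prod>i\<in>F. Xs i \<omega>) * Xs a \<omega>)"
    using insert by (simp add: mult.commute)
  also have "\<dots> = bind (distr M borel (\<lambda>\<omega>. \<Prod>i\<in>F. Xs i \<omega>)) (\<lambda>x. distr (distr M borel (Xs a)) borel (\<lambda>y. x * y))"
    by (rule distr_mult_indep[OF ind_step])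
  also have "\<dots> = bind (distr (normal_product (card F)) borel (\<lambda>x. c ^ card F * x)) (\<lambda>x. scaled_normal (x * c))"
    using insert law by (simp add: scaled_normal_def distr_distr comp_def mult.assoc)
  also have "\<dots> = distr (normal_product (Suc (card F))) borel (\<lambda>x. c ^ card F * c * x)"
    by (rule normal_product_step)
  finally show ?case using insert by (simp add: mult.commute)
qed

lemma expectation_prod_indep_fbm:
  assumes fbm: "\<forall>i\<in>J. is_fbm M H (X i)" and ind: "indep_processes M X J"
    and "finite J" "J \<noteq> {}"
  shows "prob_space.expectation M (\<lambda>\<omega>. (\<Prod>i\<in>J. X i t \<omega>) * (\<Prod>i\<in>J. X i s \<omega>))
           = fbm_cov H t s ^ card J"
proof -
  have "prob_space M" using fbm \<open>J \<noteq> {}\<close> fbm_measurable(1) by blast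
  then interpret prob_space M .
  have ind_ts: "indep_vars (\<lambda>_. borel) (\<lambda>i \<omega>. X i t \<omega> * X i s \<omega>) J"
    using indep_processes_functional[OF prob_space_axioms ind, of "\<lambda>f. f t * f s"] by simp
  have "expectation (\<lambda>\<omega>. (\<Prod>i\<in>J. X i t \<omega>) * (\<Prod>i\<in>J. X i s \<omega>))
      = expectation (\<lambda>\<omega>. \<Prod>i\<in>J. X i t \<omega> * X i s \<omega>)"
    by (simp add: prod.distrib)
  also have "\<dots> = (\<Prod>i\<in>J. expectation (\<lambda>\<omega>. X i t \<omega> * X i s \<omega>))"
    using fbm \<open>finite J\<close>
    by (intro indep_vars_lebesgue_integral[OF _ ind_ts]) (auto intro: fbm_cross_moment(1))
  also have "\<dots> = (\<Prod>i\<in>J. fbm_cov H t s)"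
    using fbm by (intro prod.cong refl fbm_cross_moment(2)) auto
  finally show ?thesis by simp
qed

theorem mainTheorem17:
  fixes H :: real and n :: nat
    and M1 :: "'a measure" and B :: "nat \<Rightarrow> real \<Rightarrow> 'a \<Rightarrow> real"
    and M2 :: "'b measure" and W :: "nat \<Rightarrow> real \<Rightarrow> 'b \<Rightarrow> real"
    and M3 :: "'c measure" and C :: "nat \<Rightarrow> real \<Rightarrow> 'c \<Rightarrow> real"
  assumes "0 < H" and "H < 1" and "1 \<le> n"
    and "\<forall>i\<in>{1..n}. is_fbm M1 H (B i)" and "indep_processes M1 B {1..n}"
    and "\<forall>i\<in>{1..<n}. is_fbm M2 (1/2) (W i)" and "is_fbm M2 H (W n)"
    and "indep_processes M2 W {1..n}"
    and "\<forall>i\<in>{1..n}. is_fbm M3 (H / real n) (C i)" and "indep_processes M3 C {1..n}"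
  shows "(\<forall>t>0.
            subord_law (map (\<lambda>i. law M1 (B i)) [1..<n+1]) (\<lambda>x. \<bar>x\<bar> powr (1/H)) t
              = subord_law (map (\<lambda>i. law M2 (W i)) [1..<n+1]) (\<lambda>x. \<bar>x\<bar>^2) t
          \<and> subord_law (map (\<lambda>i. law M2 (W i)) [1..<n+1]) (\<lambda>x. \<bar>x\<bar>^2) t
              = distr M3 borel (\<lambda>\<omega>. \<Prod>i\<in>{1..n}. C i t \<omega>))
       \<and> (\<forall>s>0. \<forall>t>0.
            prob_space.expectation M3
              (\<lambda>\<omega>. (\<Prod>i\<in>{1..n}. C i t \<omega>) * (\<Prod>i\<in>{1..n}. C i s \<omega>))
            = (1 / 2^n) * (\<bar>t\<bar> powr (2*H/n) + \<bar>s\<bar> powr (2*H/n) - \<bar>t - s\<bar> powr (2*H/n)) ^ n)"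
proof -
  have B_law: "subord_law (map (\<lambda>i. law M1 (B i)) [1..<n+1]) (\<lambda>x. \<bar>x\<bar> powr (1/H)) t
                 = distr (normal_product n) borel (\<lambda>x. \<bar>t\<bar> powr H * x)" for t
    using assms(1,3,4) by (intro subord_law_fbm[where h="\<lambda>_. H"]) (auto simp: powr_powr power2_eq_square)
  have W_law: "subord_law (map (\<lambda>i. law M2 (W i)) [1..<n+1]) (\<lambda>x. \<bar>x\<bar>^2) t
                 = distr (normal_product n) borel (\<lambda>x. \<bar>t\<bar> powr H * x)" for t
    using assms(3,6,7) by (intro subord_law_fbm[where h="\<lambda>_. 1/2"]) auto
  have C_law: "distr M3 borel (\<lambda>\<omega>. \<Prod>i\<in>{1..n}. C i t \<omega>)
                 = distr (normal_product n) borel (\<lambda>x. \<bar>t\<bar> powr H * x)" for t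
  proof -
    have "prob_space M3" using assms(3,9) fbm_measurable(1) by fastforce
    then interpret prob_space M3 .
    have "(\<bar>t\<bar> powr (H / n)) ^ n = \<bar>t\<bar> powr H"
      using assms(3) by (cases "t = 0") (simp_all add: powr_power)
    then show ?thesis
      using assms(3,9) indep_processes_functional[OF prob_space_axioms assms(10), of "\<lambda>f. f t"]
      by (subst distr_prod_indep_scaled_normal[where I="{1..n}" and c="\<bar>t\<bar> powr (H / n)"])
         (auto simp: law_fbm_scaled_normal[unfolded law_def])
  qed
  have "prob_space.expectation M3 (\<lambda>\<omega>. (\<Prod>i\<in>{1..n}. C i t \<omega>) * (\<Prod>i\<in>{1..n}. C i s \<omega>))
          = (1 / 2^n) * (\<bar>t\<bar> powr (2*H/n) + \<bar>s\<bar> powr (2*H/n) - \<bar>t - s\<bar> powr (2*H/n)) ^ n" for s t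
    using expectation_prod_indep_fbm[OF assms(9,10)] assms(3)
    by (simp add: fbm_cov_def power_divide)
  then show ?thesis using B_law W_law C_law by simp
qed

end
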